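(* The momentum map $F=(L,H)$ of the $b$-coupled spin-oscillator restricted to either open half $M^+=\{z>0\}\times\mathbb R^2$ or $M^-=\{z<0\}\times\mathbb R^2$ is surjective onto $\mathbb R^2$.
   Context: Fix constants $\rho_1,\rho_2>0$. Let $S^2\subset\mathbb R^3$ be the unit sphere with coordinates $(x,y,z)$, $x^2+y^2+z^2=1$, and $(u,v)$ coordinates on $\mathbb R^2$; $M=S^2\times\mathbb R^2$. The $b$-coupled spin-oscillator momentum map is $F=(L,H)$ with $L=\rho_1\log|z|+\frac{\rho_2}{2}(u^2+v^2)$ and $H=\frac12(xu+yv)$; on $M^{\pm}$ it is a smooth integrable system for the symplectic form $-\rho_1\frac{1}{1-x^2-y^2}dx\wedge dy+\rho_2\,du\wedge dv$ (in coordinates $(x,y,u,v)$). *)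

theory Defs
  imports "HOL-Analysis.Analysis"
begin

definition spin_osc_M_plus :: "(real \<times> real \<times> real \<times> real \<times> real) set" where
  "spin_osc_M_plus = {(x,y,z,u,v). x^2 + y^2 + z^2 = 1 \<and> z > 0}"

definition spin_osc_M_minus :: "(real \<times> real \<times> real \<times> real \<times> real) set" where
  "spin_osc_M_minus = {(x,y,z,u,v). x^2 + y^2 + z^2 = 1 \<and> z < 0}"

definition spin_osc_F :: "real \<Rightarrow> real \<Rightarrow> real \<times> real \<times> real \<times> real \<times> real \<Rightarrow> real \<times> real" where
  "spin_osc_F r1 r2 p = (case p of (x,y,z,u,w) \<Rightarrow>
     (r1 * ln (abs z) + (r2 / 2) * (u^2 + w^2), (x*u + y*w) / 2))"

end

theory Submission
  imports Defs
begin

text \<open>Since L depends on z only through \<open>ln \<bar>z\<bar>\<close>, it suffices to hit (a,b) from a point with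
  y = 0, small z > 0 and x = \<open>sqrt (1 - z\<^sup>2)\<close>; its mirror image z \<mapsto> -z then lies in the other
  half. Taking u = 2b/x fixes H = b, and as z \<rightarrow> 0 the term \<open>\<rho>\<^sub>1 ln z\<close> tends to -\<infinity> while
  \<open>u\<^sup>2 \<le> 16 b\<^sup>2 / 3\<close> stays bounded, so the remaining freedom in v adjusts L to a.\<close>

lemma spin_osc_F_uminus_z: "spin_osc_F r1 r2 (x, y, -z, u, w) = spin_osc_F r1 r2 (x, y, z, u, w)"
  by (simp add: spin_osc_F_def)

lemma spin_osc_F_fibre_point:
  fixes r1 r2 x z a b :: real
  assumes "r2 > 0" and "x \<noteq> 0" and "r1 * ln \<bar>z\<bar> + 2 * r2 * b^2 / x^2 \<le> a"
  shows "\<exists>u w. spin_osc_F r1 r2 (x, 0, z, u, w) = (a, b)"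
proof -
  define u where "u = 2 * b / x"
  define q where "q = 2 * (a - r1 * ln \<bar>z\<bar>) / r2 - u^2"
  have "r2 / 2 * u^2 = 2 * r2 * b^2 / x^2"
    unfolding u_def by (simp add: power_divide power_mult_distrib)
  with assms have "r2 / 2 * u^2 \<le> a - r1 * ln \<bar>z\<bar>" by linarith
  with \<open>r2 > 0\<close> have "q \<ge> 0" unfolding q_def by (simp add: field_simps)
  then have "r1 * ln \<bar>z\<bar> + r2 / 2 * (u^2 + (sqrt q)^2) = a"
    using \<open>r2 > 0\<close> unfolding q_def by (simp add: field_simps)
  moreover have "x * u / 2 = b"
    using \<open>x \<noteq> 0\<close> unfolding u_def by simp
  ultimately show ?thesis
    by (intro exI[of _ u] exI[of _ "sqrt q"]) (simp add: spin_osc_F_def)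
qed

lemma exists_small_ln_bound:
  fixes r c :: real
  assumes "r > 0"
  obtains z where "0 < z" "z \<le> 1/2" "r * ln z \<le> c"
proof
  let ?z = "min (1/2) (exp (c / r))"
  show "0 < ?z" and "?z \<le> 1/2" by auto
  have "ln ?z \<le> ln (exp (c / r))" by (subst ln_le_cancel_iff) auto
  then have "ln ?z \<le> c / r" by simp
  with assms show "r * ln ?z \<le> c" by (simp add: field_simps)
qed

lemma spin_osc_F_preimage:
  fixes r1 r2 a b :: real
  assumes "r1 > 0" and "r2 > 0"
  obtains x z u w where "x^2 + 0^2 + z^2 = 1" "z > 0" "spin_osc_F r1 r2 (x, 0, z, u, w) = (a, b)"
proof -
  obtain z where z: "0 < z" "z \<le> 1/2" "r1 * ln z \<le> a - 8 * r2 * b^2 / 3"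
    using exists_small_ln_bound[OF \<open>r1 > 0\<close>] .
  define x where "x = sqrt (1 - z^2)"
  have "z^2 \<le> (1/2)^2" using z by (intro power_mono) auto
  then have x_sq: "x^2 = 1 - z^2" and x_sq_ge: "x^2 \<ge> 3/4"
    unfolding x_def by (simp_all add: power2_eq_square)
  then have "x \<noteq> 0" by auto
  have "2 * r2 * b^2 / x^2 \<le> 2 * r2 * b^2 / (3/4)"
    using x_sq_ge \<open>r2 > 0\<close> by (intro divide_left_mono) auto
  with z have "r1 * ln \<bar>z\<bar> + 2 * r2 * b^2 / x^2 \<le> a" by simp
  then obtain u w where "spin_osc_F r1 r2 (x, 0, z, u, w) = (a, b)"
    using spin_osc_F_fibre_point[OF \<open>r2 > 0\<close> \<open>x \<noteq> 0\<close>] by blast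
  with x_sq z show thesis by (intro that) auto
qed

theorem corollary4p7:
  fixes \<rho>1 \<rho>2 :: real
  assumes "\<rho>1 > 0" and "\<rho>2 > 0"
  shows "spin_osc_F \<rho>1 \<rho>2 ` spin_osc_M_plus = UNIV
       \<and> spin_osc_F \<rho>1 \<rho>2 ` spin_osc_M_minus = UNIV"
proof -
  have "(a, b) \<in> spin_osc_F \<rho>1 \<rho>2 ` spin_osc_M_plus \<inter> spin_osc_F \<rho>1 \<rho>2 ` spin_osc_M_minus"
    for a b
  proof -
    obtain x z u w where sphere: "x^2 + 0^2 + z^2 = 1" and "z > 0"
      and F: "spin_osc_F \<rho>1 \<rho>2 (x, 0, z, u, w) = (a, b)"
      using spin_osc_F_preimage[OF assms] .
    have "(x, 0, z, u, w) \<in> spin_osc_M_plus" "(x, 0, -z, u, w) \<in> spin_osc_M_minus"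
      using sphere \<open>z > 0\<close> by (auto simp: spin_osc_M_plus_def spin_osc_M_minus_def)
    with F show ?thesis
      by (metis IntI image_eqI spin_osc_F_uminus_z)
  qed
  then show ?thesis by auto
qed

end
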